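(* Let $N\ge1$, $d_1,d_2,d_3,d_4\ge1$, $\kappa_1,\kappa_2\ge0$, and let $\{(U_i,V_i)\}_{i=1}^N$, $U_i(t)\in\mathbb C^{d_1\times d_2}$, $V_i(t)\in\mathbb C^{d_3\times d_4}$, be a solution of $\dot U_j=\frac{\kappa_1}{N}\sum_k(\langle V_j,V_k\rangle_FU_kU_j^\dagger U_j-\langle V_k,V_j\rangle_FU_jU_k^\dagger U_j)+\frac{\kappa_2}{N}\sum_k(\langle V_j,V_k\rangle_FU_jU_j^\dagger U_k-\langle V_k,V_j\rangle_FU_jU_k^\dagger U_j)$, $\dot V_j=\frac{\kappa_1}{N}\sum_k(\langle U_j,U_k\rangle_FV_kV_j^\dagger V_j-\langle U_k,U_j\rangle_FV_jV_k^\dagger V_j)+\frac{\kappa_2}{N}\sum_k(\langle U_j,U_k\rangle_FV_jV_j^\dagger V_k-\langle U_k,U_j\rangle_FV_jV_k^\dagger V_j)$. Then $\mathcal E(U,V):=1-\frac1{N^2}\sum_{i,j=1}^N\langle U_i,U_j\rangle_F\langle V_i,V_j\rangle_F$ satisfies $$\frac{d}{dt}\mathcal E=-\frac{\kappa_1}{N}\sum_{j=1}^N\Big\|\frac1N\sum_{i=1}^N\big(\langle V_j,V_i\rangle_FU_iU_j^\dagger-\langle V_i,V_j\rangle_FU_jU_i^\dagger\big)\Big\|_F^2-\frac{\kappa_1}{N}\sum_{j=1}^N\Big\|\frac1N\sum_{i=1}^N\big(\langle U_j,U_i\rangle_FV_iV_j^\dagger-\langle U_i,U_j\rangle_FV_jV_i^\dagger\big)\Big\|_F^2$$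 $$-\frac{\kappa_2}{N}\sum_{j=1}^N\Big\|\frac1N\sum_{i=1}^N\big(\langle V_j,V_i\rangle_FU_j^\dagger U_i-\langle V_i,V_j\rangle_FU_i^\dagger U_j\big)\Big\|_F^2-\frac{\kappa_2}{N}\sum_{j=1}^N\Big\|\frac1N\sum_{i=1}^N\big(\langle U_j,U_i\rangle_FV_j^\dagger V_i-\langle U_i,U_j\rangle_FV_i^\dagger V_j\big)\Big\|_F^2.$$ In particular $\mathcal E$ is non-increasing in time.
   Context: $\langle A,B\rangle_F=\mathrm{tr}(A^\dagger B)$ and $\|A\|_F=\sqrt{\langle A,A\rangle_F}$ for complex matrices; sums over $k$ run from $1$ to $N$. *)

theory Defs
  imports "HOL-Analysis.Analysis"
begin

text \<open>Complex matrices of size m x n are represented as complex^'n^'m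
  (rows indexed by 'm, columns by 'n); the sizes d1..d4 are the cardinalities
  of the (finite, nonempty) index types.\<close>

definition cadj :: "complex^'n^'m \<Rightarrow> complex^'m^'n" where
  "cadj A = (\<chi> i j. cnj (A $ j $ i))"

definition ctrace :: "complex^'n^'n \<Rightarrow> complex" where
  "ctrace A = (\<Sum>i\<in>UNIV. A $ i $ i)"

definition frob_inner :: "complex^'n^'m \<Rightarrow> complex^'n^'m \<Rightarrow> complex" where
  "frob_inner A B = ctrace (cadj A ** B)"

definition frob_norm :: "complex^'n^'m \<Rightarrow> real" where
  "frob_norm A = sqrt (Re (frob_inner A A))"

definition cscale :: "complex \<Rightarrow> complex^'n^'m \<Rightarrow> complex^'n^'m" where
  "cscale c A = (\<chi> i j. c * A $ i $ j)"

text \<open>Right-hand side of the U-equation for particle j, given a configuration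
  (U_k, V_k), k = 1..N (the V-equation is the same with U and V swapped).\<close>
definition field ::
  "real \<Rightarrow> real \<Rightarrow> nat \<Rightarrow> (nat \<Rightarrow> complex^'b^'a) \<Rightarrow> (nat \<Rightarrow> complex^'d^'c) \<Rightarrow> nat \<Rightarrow> complex^'b^'a" where
  "field k1 k2 N U V j =
     (k1 / real N) *\<^sub>R (\<Sum>k = 1..N.
        cscale (frob_inner (V j) (V k)) (U k ** cadj (U j) ** U j)
      - cscale (frob_inner (V k) (V j)) (U j ** cadj (U k) ** U j))
   + (k2 / real N) *\<^sub>R (\<Sum>k = 1..N.
        cscale (frob_inner (V j) (V k)) (U j ** cadj (U j) ** U k)
      - cscale (frob_inner (V k) (V j)) (U j ** cadj (U k) ** U j))"

definition energy :: "nat \<Rightarrow> (nat \<Rightarrow> complex^'b^'a) \<Rightarrow> (nat \<Rightarrow> complex^'d^'c) \<Rightarrow> complex" where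
  "energy N U V = 1 - (1 / (of_nat N)^2) *
     (\<Sum>i = 1..N. \<Sum>j = 1..N. frob_inner (U i) (U j) * frob_inner (V i) (V j))"

definition dissipation ::
  "real \<Rightarrow> real \<Rightarrow> nat \<Rightarrow> (nat \<Rightarrow> complex^'b^'a) \<Rightarrow> (nat \<Rightarrow> complex^'d^'c) \<Rightarrow> real" where
  "dissipation k1 k2 N U V =
     - (k1 / real N) * (\<Sum>j = 1..N. (frob_norm ((1 / real N) *\<^sub>R (\<Sum>i = 1..N.
          cscale (frob_inner (V j) (V i)) (U i ** cadj (U j))
        - cscale (frob_inner (V i) (V j)) (U j ** cadj (U i)))))^2)
     - (k1 / real N) * (\<Sum>j = 1..N. (frob_norm ((1 / real N) *\<^sub>R (\<Sum>i = 1..N.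
          cscale (frob_inner (U j) (U i)) (V i ** cadj (V j))
        - cscale (frob_inner (U i) (U j)) (V j ** cadj (V i)))))^2)
     - (k2 / real N) * (\<Sum>j = 1..N. (frob_norm ((1 / real N) *\<^sub>R (\<Sum>i = 1..N.
          cscale (frob_inner (V j) (V i)) (cadj (U j) ** U i)
        - cscale (frob_inner (V i) (V j)) (cadj (U i) ** U j))))^2)
     - (k2 / real N) * (\<Sum>j = 1..N. (frob_norm ((1 / real N) *\<^sub>R (\<Sum>i = 1..N.
          cscale (frob_inner (U j) (U i)) (cadj (V j) ** V i)
        - cscale (frob_inner (U i) (U j)) (cadj (V i) ** V j))))^2)"

end

theory Submission
  imports Defs
begin

text \<open>
  Write W_j = \<Sum>_i \<langle>V_j, V_i\<rangle> U_i, P_j = W_j U_j^\<dagger> and Q_j = U_j^\<dagger> W_j.  The U-equation reads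
  U_j' = \<kappa>_1/N (P_j - P_j^\<dagger>) U_j + \<kappa>_2/N U_j (Q_j - Q_j^\<dagger>), and since the weights are
  Hermitian, the U-part of the derivative of \<Sum>_i_j \<langle>U_i, U_j\<rangle> \<langle>V_i, V_j\<rangle> is
  2 Re \<Sum>_j \<langle>W_j, U_j'\<rangle>.  Moving U_j across the Frobenius product turns
  \<langle>W_j, (P_j - P_j^\<dagger>) U_j\<rangle> into \<langle>P_j, P_j - P_j^\<dagger>\<rangle>, whose doubled real part is
  \<parallel>P_j - P_j^\<dagger>\<parallel>^2, and likewise for Q_j.  So the U-part is
  \<Sum>_j \<kappa>_1/N \<parallel>P_j - P_j^\<dagger>\<parallel>^2 + \<kappa>_2/N \<parallel>Q_j - Q_j^\<dagger>\<parallel>^2 \<ge> 0, and the V-part is the same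
  with U and V exchanged.
\<close>

lemma cadj_cadj [simp]: "cadj (cadj A) = A"
  by (simp add: cadj_def vec_eq_iff)

lemma cadj_matrix_mult: "cadj (A ** B) = cadj B ** cadj A"
  by (simp add: cadj_def vec_eq_iff matrix_matrix_mult_def mult.commute)

lemma cadj_sum: "cadj (\<Sum>i\<in>I. A i) = (\<Sum>i\<in>I. cadj (A i))"
  by (simp add: cadj_def vec_eq_iff)

lemma cadj_cscale: "cadj (cscale c A) = cscale (cnj c) (cadj A)"
  by (simp add: cadj_def cscale_def vec_eq_iff)

lemma bounded_bilinear_matrix_mult:
  "bounded_bilinear ((**) :: complex^'n^'m \<Rightarrow> complex^'p^'n \<Rightarrow> complex^'p^'m)"
  unfolding bilinear_conv_bounded_bilinear[symmetric] bilinear_def linear_iff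
  by (simp add: matrix_matrix_mult_def vec_eq_iff algebra_simps sum.distrib scaleR_sum_right)

interpretation matrix_mult: bounded_bilinear "(**) :: complex^'n^'m \<Rightarrow> complex^'p^'n \<Rightarrow> _"
  by (rule bounded_bilinear_matrix_mult)

lemma matrix_mult_cscale_left: "cscale c A ** B = cscale c (A ** B)"
  by (simp add: vec_eq_iff matrix_matrix_mult_def cscale_def sum_distrib_left mult.assoc)

lemma matrix_mult_cscale_right: "A ** cscale c B = cscale c (A ** B)"
  by (simp add: vec_eq_iff matrix_matrix_mult_def cscale_def sum_distrib_left algebra_simps)

lemma frob_inner_eq_sum: "frob_inner A B = (\<Sum>i\<in>UNIV. \<Sum>k\<in>UNIV. cnj (A$i$k) * B$i$k)"
  unfolding frob_inner_def ctrace_def cadj_def matrix_matrix_mult_def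
  by simp (rule sum.swap)

lemma bounded_bilinear_frob_inner: "bounded_bilinear (frob_inner :: complex^'n^'m \<Rightarrow> _)"
  unfolding bilinear_conv_bounded_bilinear[symmetric] bilinear_def linear_iff
  by (simp add: frob_inner_eq_sum algebra_simps sum.distrib scaleR_sum_right)

interpretation frob_inner: bounded_bilinear "frob_inner :: complex^'n^'m \<Rightarrow> _"
  by (rule bounded_bilinear_frob_inner)

lemma cnj_frob_inner: "cnj (frob_inner A B) = frob_inner B A"
  by (simp add: frob_inner_eq_sum mult.commute)

lemma frob_inner_cadj: "frob_inner (cadj A) (cadj B) = frob_inner B A"
  unfolding frob_inner_eq_sum cadj_def by (simp add: mult.commute) (rule sum.swap)

lemma frob_inner_cscale_left: "frob_inner (cscale c A) B = cnj c * frob_inner A B"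
  by (simp add: frob_inner_eq_sum cscale_def sum_distrib_left mult.assoc)

lemma frob_inner_matrix_mult_right: "frob_inner A (B ** C) = frob_inner (A ** cadj C) B"
  unfolding frob_inner_eq_sum cadj_def matrix_matrix_mult_def
  by (simp add: sum_distrib_left sum_distrib_right ac_simps) (rule sum.cong[OF refl], rule sum.swap)

lemma frob_inner_matrix_mult_left: "frob_inner A (B ** C) = frob_inner (cadj B ** A) C"
proof -
  have "frob_inner A (B ** C) = frob_inner (cadj C ** cadj B) (cadj A)"
    by (simp add: frob_inner_cadj flip: cadj_matrix_mult)
  also have "\<dots> = frob_inner (cadj C) (cadj (cadj B ** A))"
    by (simp add: frob_inner_matrix_mult_right cadj_matrix_mult)
  finally show ?thesis by (simp add: frob_inner_cadj)
qed

lemma frob_inner_self: "frob_inner A A = complex_of_real ((frob_norm A)\<^sup>2)"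
proof -
  have "frob_inner A A = complex_of_real (Re (frob_inner A A))"
    by (simp add: frob_inner_eq_sum complex_eq_iff)
  moreover have "Re (frob_inner A A) \<ge> 0"
    by (simp add: frob_inner_eq_sum sum_nonneg)
  ultimately show ?thesis by (simp add: frob_norm_def)
qed

lemma frob_norm_scaleR: "frob_norm (r *\<^sub>R A) = \<bar>r\<bar> * frob_norm A"
  by (simp add: frob_norm_def frob_inner.scaleR_left frob_inner.scaleR_right real_sqrt_mult
      flip: power2_eq_square)

definition skew :: "complex^'n^'n \<Rightarrow> complex^'n^'n"
  where "skew A = A - cadj A"

text \<open>W_j, P_j and Q_j of the sketch above.\<close>

definition weighted_sum ::
  "nat \<Rightarrow> (nat \<Rightarrow> complex^'b^'a) \<Rightarrow> (nat \<Rightarrow> complex^'d^'c) \<Rightarrow> nat \<Rightarrow> complex^'b^'a"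
  where "weighted_sum N X Y j = (\<Sum>i = 1..N. cscale (frob_inner (Y j) (Y i)) (X i))"

definition left_moment ::
  "nat \<Rightarrow> (nat \<Rightarrow> complex^'b^'a) \<Rightarrow> (nat \<Rightarrow> complex^'d^'c) \<Rightarrow> nat \<Rightarrow> complex^'a^'a"
  where "left_moment N X Y j = weighted_sum N X Y j ** cadj (X j)"

definition right_moment ::
  "nat \<Rightarrow> (nat \<Rightarrow> complex^'b^'a) \<Rightarrow> (nat \<Rightarrow> complex^'d^'c) \<Rightarrow> nat \<Rightarrow> complex^'b^'b"
  where "right_moment N X Y j = cadj (X j) ** weighted_sum N X Y j"

lemma frob_inner_skew:
  "frob_inner A (skew A) + cnj (frob_inner A (skew A)) = frob_inner (skew A) (skew A)"
  using frob_inner_cadj[of A A] cnj_frob_inner[of A "cadj A"] cnj_frob_inner[of A A]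
  by (simp add: skew_def frob_inner.diff_left frob_inner.diff_right)

lemma skew_left_moment:
  "skew (left_moment N X Y j) =
     (\<Sum>i = 1..N. cscale (frob_inner (Y j) (Y i)) (X i ** cadj (X j))
                - cscale (frob_inner (Y i) (Y j)) (X j ** cadj (X i)))"
  by (simp add: skew_def left_moment_def weighted_sum_def cadj_matrix_mult cadj_sum cadj_cscale
      cnj_frob_inner sum_subtractf matrix_mult.sum_left matrix_mult.sum_right matrix_mult_cscale_left matrix_mult_cscale_right)

lemma skew_right_moment:
  "skew (right_moment N X Y j) =
     (\<Sum>i = 1..N. cscale (frob_inner (Y j) (Y i)) (cadj (X j) ** X i)
                - cscale (frob_inner (Y i) (Y j)) (cadj (X i) ** X j))"
  by (simp add: skew_def right_moment_def weighted_sum_def cadj_matrix_mult cadj_sum cadj_cscale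
      cnj_frob_inner sum_subtractf matrix_mult.sum_left matrix_mult.sum_right matrix_mult_cscale_left matrix_mult_cscale_right)

lemma field_eq_moments:
  "field k1 k2 N X Y j =
     (k1 / real N) *\<^sub>R (skew (left_moment N X Y j) ** X j)
   + (k2 / real N) *\<^sub>R (X j ** skew (right_moment N X Y j))"
  by (simp add: field_def skew_left_moment skew_right_moment
      matrix_mult.sum_left matrix_mult.sum_right matrix_mult.diff_left matrix_mult.diff_right
      matrix_mult_cscale_left matrix_mult_cscale_right matrix_mul_assoc)

definition correlation ::
  "nat \<Rightarrow> (nat \<Rightarrow> complex^'b^'a) \<Rightarrow> (nat \<Rightarrow> complex^'d^'c) \<Rightarrow> complex"
  where "correlation N X Y =
    (\<Sum>i = 1..N. \<Sum>j = 1..N. frob_inner (X i) (X j) * frob_inner (Y i) (Y j))"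

definition correlation_variation ::
  "nat \<Rightarrow> (nat \<Rightarrow> complex^'b^'a) \<Rightarrow> (nat \<Rightarrow> complex^'b^'a) \<Rightarrow> (nat \<Rightarrow> complex^'d^'c) \<Rightarrow> complex"
  where "correlation_variation N X X' Y =
    (\<Sum>i = 1..N. \<Sum>j = 1..N.
       (frob_inner (X' i) (X j) + frob_inner (X i) (X' j)) * frob_inner (Y i) (Y j))"

lemma correlation_real: "correlation N X Y \<in> \<real>"
proof -
  have "cnj (correlation N X Y) = correlation N X Y"
    unfolding correlation_def by (simp add: cnj_frob_inner) (rule sum.swap)
  then show ?thesis by (simp add: Reals_cnj_iff)
qed

lemma energy_eq_correlation: "energy N X Y = 1 - correlation N X Y / (of_nat N)\<^sup>2"
  by (simp add: energy_def correlation_def)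

lemma energy_real: "energy N X Y \<in> \<real>"
  unfolding energy_eq_correlation using correlation_real by (intro Reals_diff Reals_divide) auto

lemma correlation_has_vector_derivative:
  assumes "\<And>j. j \<in> {1..N} \<Longrightarrow> (X j has_vector_derivative X' j) (at t within T)"
    and "\<And>j. j \<in> {1..N} \<Longrightarrow> (Y j has_vector_derivative Y' j) (at t within T)"
  shows "((\<lambda>s. correlation N (\<lambda>k. X k s) (\<lambda>k. Y k s)) has_vector_derivative
           correlation_variation N (\<lambda>k. X k t) X' (\<lambda>k. Y k t)
         + correlation_variation N (\<lambda>k. Y k t) Y' (\<lambda>k. X k t)) (at t within T)"
proof -
  have "((\<lambda>s. correlation N (\<lambda>k. X k s) (\<lambda>k. Y k s)) has_vector_derivative
      (\<Sum>i = 1..N. \<Sum>j = 1..N.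
         frob_inner (X i t) (X j t) * (frob_inner (Y i t) (Y' j) + frob_inner (Y' i) (Y j t))
       + (frob_inner (X i t) (X' j) + frob_inner (X' i) (X j t)) * frob_inner (Y i t) (Y j t)))
      (at t within T)"
    unfolding correlation_def
    by (intro has_vector_derivative_sum has_vector_derivative_mult
        frob_inner.has_vector_derivative assms) auto
  then show ?thesis
    by (simp add: correlation_variation_def sum.distrib[symmetric] algebra_simps)
qed

lemma correlation_variation_eq_weighted_sum:
  "correlation_variation N X X' Y =
     (\<Sum>j = 1..N. frob_inner (weighted_sum N X Y j) (X' j)
                + cnj (frob_inner (weighted_sum N X Y j) (X' j)))"
proof -
  have right: "(\<Sum>i = 1..N. \<Sum>j = 1..N. frob_inner (X i) (X' j) * frob_inner (Y i) (Y j))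
      = (\<Sum>j = 1..N. frob_inner (weighted_sum N X Y j) (X' j))"
    unfolding weighted_sum_def frob_inner.sum_left frob_inner_cscale_left cnj_frob_inner
    by (subst sum.swap) (simp add: mult.commute)
  have left: "(\<Sum>i = 1..N. \<Sum>j = 1..N. frob_inner (X' i) (X j) * frob_inner (Y i) (Y j))
      = cnj (\<Sum>i = 1..N. \<Sum>j = 1..N. frob_inner (X i) (X' j) * frob_inner (Y i) (Y j))"
    by (simp add: cnj_frob_inner) (rule sum.swap)
  show ?thesis
    unfolding correlation_variation_def distrib_right sum.distrib left right
    by (simp add: add.commute)
qed

definition moment_dissipation ::
  "real \<Rightarrow> real \<Rightarrow> nat \<Rightarrow> (nat \<Rightarrow> complex^'b^'a) \<Rightarrow> (nat \<Rightarrow> complex^'d^'c) \<Rightarrow> real"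
  where "moment_dissipation k1 k2 N X Y =
     (k1 / real N) * (\<Sum>j = 1..N.
        (frob_norm ((1 / real N) *\<^sub>R skew (left_moment N X Y j)))\<^sup>2)
   + (k2 / real N) * (\<Sum>j = 1..N.
        (frob_norm ((1 / real N) *\<^sub>R skew (right_moment N X Y j)))\<^sup>2)"

lemma dissipation_eq_moment_dissipation:
  "dissipation k1 k2 N U V = - moment_dissipation k1 k2 N U V - moment_dissipation k1 k2 N V U"
  by (simp add: dissipation_def moment_dissipation_def skew_left_moment skew_right_moment)

lemma moment_dissipation_nonneg:
  "k1 \<ge> 0 \<Longrightarrow> k2 \<ge> 0 \<Longrightarrow> moment_dissipation k1 k2 N X Y \<ge> 0"
  unfolding moment_dissipation_def by (intro add_nonneg_nonneg mult_nonneg_nonneg sum_nonneg) auto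

lemma dissipation_nonpos: "k1 \<ge> 0 \<Longrightarrow> k2 \<ge> 0 \<Longrightarrow> dissipation k1 k2 N U V \<le> 0"
  using moment_dissipation_nonneg[of k1 k2 N U V] moment_dissipation_nonneg[of k1 k2 N V U]
  unfolding dissipation_eq_moment_dissipation by linarith

lemma frob_inner_weighted_sum_field:
  "frob_inner (weighted_sum N X Y j) (field k1 k2 N X Y j) =
     of_real (k1 / real N) * frob_inner (left_moment N X Y j) (skew (left_moment N X Y j))
   + of_real (k2 / real N) * frob_inner (right_moment N X Y j) (skew (right_moment N X Y j))"
proof -
  have "frob_inner (weighted_sum N X Y j) (skew (left_moment N X Y j) ** X j)
      = frob_inner (left_moment N X Y j) (skew (left_moment N X Y j))"
    by (simp only: frob_inner_matrix_mult_right left_moment_def)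
  moreover have "frob_inner (weighted_sum N X Y j) (X j ** skew (right_moment N X Y j))
      = frob_inner (right_moment N X Y j) (skew (right_moment N X Y j))"
    by (simp only: frob_inner_matrix_mult_left right_moment_def)
  ultimately show ?thesis
    unfolding field_eq_moments frob_inner.add_right frob_inner.scaleR_right
    by (simp add: scaleR_conv_of_real)
qed

lemma correlation_variation_field:
  "correlation_variation N X (field k1 k2 N X Y) Y =
     of_real ((real N)\<^sup>2 * moment_dissipation k1 k2 N X Y)"
proof (cases "N = 0")
  case True
  then show ?thesis by (simp add: correlation_variation_def moment_dissipation_def)
next
  case False
  let ?L = "\<lambda>j. skew (left_moment N X Y j)"
  let ?R = "\<lambda>j. skew (right_moment N X Y j)"
  have "frob_inner (weighted_sum N X Y j) (field k1 k2 N X Y j)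
        + cnj (frob_inner (weighted_sum N X Y j) (field k1 k2 N X Y j))
      = of_real (k1 / real N * (frob_norm (?L j))\<^sup>2 + k2 / real N * (frob_norm (?R j))\<^sup>2)" for j
  proof -
    have "frob_inner (weighted_sum N X Y j) (field k1 k2 N X Y j)
          + cnj (frob_inner (weighted_sum N X Y j) (field k1 k2 N X Y j))
        = of_real (k1 / real N) * frob_inner (?L j) (?L j)
        + of_real (k2 / real N) * frob_inner (?R j) (?R j)"
      unfolding frob_inner_weighted_sum_field frob_inner_skew[symmetric]
      by (simp add: algebra_simps)
    then show ?thesis by (simp add: frob_inner_self)
  qed
  moreover have "(real N)\<^sup>2 * moment_dissipation k1 k2 N X Y
      = (\<Sum>j = 1..N. k1 / real N * (frob_norm (?L j))\<^sup>2 + k2 / real N * (frob_norm (?R j))\<^sup>2)"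
  proof -
    have sq: "(frob_norm ((1 / real N) *\<^sub>R A))\<^sup>2 = (frob_norm A)\<^sup>2 / (real N)\<^sup>2"
      for A :: "complex^'n^'m"
      by (simp add: frob_norm_scaleR power_mult_distrib power_divide)
    have "moment_dissipation k1 k2 N X Y
        = k1 / real N * ((\<Sum>j = 1..N. (frob_norm (?L j))\<^sup>2) / (real N)\<^sup>2)
        + k2 / real N * ((\<Sum>j = 1..N. (frob_norm (?R j))\<^sup>2) / (real N)\<^sup>2)"
      unfolding moment_dissipation_def sq sum_divide_distrib ..
    then have "(real N)\<^sup>2 * moment_dissipation k1 k2 N X Y
        = k1 / real N * (\<Sum>j = 1..N. (frob_norm (?L j))\<^sup>2)
        + k2 / real N * (\<Sum>j = 1..N. (frob_norm (?R j))\<^sup>2)"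
      using False by (simp add: distrib_left)
    then show ?thesis
      by (simp add: sum.distrib sum_distrib_left)
  qed
  ultimately show ?thesis
    by (simp add: correlation_variation_eq_weighted_sum)
qed

lemma correlation_has_vector_derivative_field:
  assumes "\<And>j. j \<in> {1..N} \<Longrightarrow>
      (X j has_vector_derivative field k1 k2 N (\<lambda>k. X k t) (\<lambda>k. Y k t) j) (at t within T)"
    and "\<And>j. j \<in> {1..N} \<Longrightarrow>
      (Y j has_vector_derivative field k1 k2 N (\<lambda>k. Y k t) (\<lambda>k. X k t) j) (at t within T)"
  shows "((\<lambda>s. correlation N (\<lambda>k. X k s) (\<lambda>k. Y k s)) has_vector_derivative
           of_real ((real N)\<^sup>2 * (moment_dissipation k1 k2 N (\<lambda>k. X k t) (\<lambda>k. Y k t)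
                                + moment_dissipation k1 k2 N (\<lambda>k. Y k t) (\<lambda>k. X k t))))
         (at t within T)"
  using correlation_has_vector_derivative[where N = N
      and X' = "field k1 k2 N (\<lambda>k. X k t) (\<lambda>k. Y k t)"
      and Y' = "field k1 k2 N (\<lambda>k. Y k t) (\<lambda>k. X k t)", OF assms]
  by (simp add: correlation_variation_field distrib_left)

lemma energy_has_vector_derivative_field:
  assumes "N \<ge> 1"
    and "\<And>j. j \<in> {1..N} \<Longrightarrow>
      (X j has_vector_derivative field k1 k2 N (\<lambda>k. X k t) (\<lambda>k. Y k t) j) (at t within T)"
    and "\<And>j. j \<in> {1..N} \<Longrightarrow>
      (Y j has_vector_derivative field k1 k2 N (\<lambda>k. Y k t) (\<lambda>k. X k t) j) (at t within T)"
  shows "((\<lambda>s. energy N (\<lambda>k. X k s) (\<lambda>k. Y k s)) has_vector_derivative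
           of_real (dissipation k1 k2 N (\<lambda>k. X k t) (\<lambda>k. Y k t))) (at t within T)"
proof -
  let ?D = "moment_dissipation k1 k2 N (\<lambda>k. X k t) (\<lambda>k. Y k t)
          + moment_dissipation k1 k2 N (\<lambda>k. Y k t) (\<lambda>k. X k t)"
  have "((\<lambda>s. 1 - correlation N (\<lambda>k. X k s) (\<lambda>k. Y k s) / (of_nat N)\<^sup>2) has_vector_derivative
      0 - of_real ((real N)\<^sup>2 * ?D) / (of_nat N)\<^sup>2) (at t within T)"
    by (intro has_vector_derivative_diff has_vector_derivative_const has_vector_derivative_divide
        correlation_has_vector_derivative_field assms)
  moreover have "0 - of_real ((real N)\<^sup>2 * ?D) / (of_nat N)\<^sup>2
      = complex_of_real (dissipation k1 k2 N (\<lambda>k. X k t) (\<lambda>k. Y k t))"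
    using assms(1) by (simp add: dissipation_eq_moment_dissipation)
  ultimately show ?thesis
    unfolding energy_eq_correlation by simp
qed

lemma has_real_derivative_nonpos_imp_antimono:
  fixes f :: "real \<Rightarrow> real"
  assumes "is_interval T"
    and deriv: "\<And>t. t \<in> T \<Longrightarrow> (f has_real_derivative f' t) (at t within T)"
    and nonpos: "\<And>t. t \<in> T \<Longrightarrow> f' t \<le> 0"
    and "s \<in> T" "t \<in> T" "s \<le> t"
  shows "f t \<le> f s"
proof -
  have sub: "{s..t} \<subseteq> T"
    using interval_subset_is_interval[OF \<open>is_interval T\<close>, of s t] assms(4,5)
    by (simp add: cbox_interval)
  have "(f has_derivative (*) (f' x)) (at x within {s..t})" if "s \<le> x" "x \<le> t" for x
    using DERIV_subset[OF deriv sub] sub that unfolding has_field_derivative_def by auto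
  then obtain x where x: "x \<in> {s..t}" "f t - f s = f' x * (t - s)"
    using mvt_very_simple[OF \<open>s \<le> t\<close>, of f "\<lambda>x. (*) (f' x)"] by blast
  have "f' x * (t - s) \<le> 0"
    using nonpos[of x] \<open>s \<le> t\<close> sub x(1) by (simp add: mult_nonpos_nonneg subset_iff)
  with x(2) show ?thesis by linarith
qed

theorem lemma3p1:
  fixes N :: nat and k1 k2 :: real and T :: "real set"
    and U :: "nat \<Rightarrow> real \<Rightarrow> complex^'d2^'d1"
    and V :: "nat \<Rightarrow> real \<Rightarrow> complex^'d4^'d3"
  assumes "N \<ge> 1" and "k1 \<ge> 0" and "k2 \<ge> 0"
    and "is_interval T"
    and solU: "\<And>j t. j \<in> {1..N} \<Longrightarrow> t \<in> T \<Longrightarrow>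
       ((\<lambda>s. U j s) has_vector_derivative
          field k1 k2 N (\<lambda>k. U k t) (\<lambda>k. V k t) j) (at t within T)"
    and solV: "\<And>j t. j \<in> {1..N} \<Longrightarrow> t \<in> T \<Longrightarrow>
       ((\<lambda>s. V j s) has_vector_derivative
          field k1 k2 N (\<lambda>k. V k t) (\<lambda>k. U k t) j) (at t within T)"
  shows "(\<forall>t\<in>T. ((\<lambda>s. energy N (\<lambda>k. U k s) (\<lambda>k. V k s)) has_vector_derivative
              complex_of_real (dissipation k1 k2 N (\<lambda>k. U k t) (\<lambda>k. V k t))) (at t within T))
       \<and> (\<forall>t\<in>T. energy N (\<lambda>k. U k t) (\<lambda>k. V k t) \<in> \<real>)
       \<and> (\<forall>s\<in>T. \<forall>t\<in>T. s \<le> t \<longrightarrow>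
            Re (energy N (\<lambda>k. U k t) (\<lambda>k. V k t)) \<le> Re (energy N (\<lambda>k. U k s) (\<lambda>k. V k s)))"
proof -
  have deriv: "((\<lambda>s. energy N (\<lambda>k. U k s) (\<lambda>k. V k s)) has_vector_derivative
      of_real (dissipation k1 k2 N (\<lambda>k. U k t) (\<lambda>k. V k t))) (at t within T)" if "t \<in> T" for t
    by (rule energy_has_vector_derivative_field[OF \<open>N \<ge> 1\<close>]) (use solU solV that in auto)
  moreover have "energy N (\<lambda>k. U k t) (\<lambda>k. V k t) \<in> \<real>" for t
    by (rule energy_real)
  moreover have "Re (energy N (\<lambda>k. U k t) (\<lambda>k. V k t)) \<le> Re (energy N (\<lambda>k. U k s) (\<lambda>k. V k s))"
    if "s \<in> T" "t \<in> T" "s \<le> t" for s t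
  proof (rule has_real_derivative_nonpos_imp_antimono[OF \<open>is_interval T\<close> _ _ that])
    show "((\<lambda>s. Re (energy N (\<lambda>k. U k s) (\<lambda>k. V k s))) has_real_derivative
        dissipation k1 k2 N (\<lambda>k. U k t) (\<lambda>k. V k t)) (at t within T)" if "t \<in> T" for t
      using bounded_linear.has_vector_derivative[OF bounded_linear_Re deriv[OF that]]
      by (simp add: has_real_derivative_iff_has_vector_derivative)
    show "dissipation k1 k2 N (\<lambda>k. U k t) (\<lambda>k. V k t) \<le> 0" for t
      using dissipation_nonpos[OF \<open>k1 \<ge> 0\<close> \<open>k2 \<ge> 0\<close>] .
  qed
  ultimately show ?thesis by blast
qed

end
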